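(* Let $\epsilon\in(0,1)$, let $x:\mathcal{A}\to(0,1)$ be given, and put $\gamma:=\frac{\log_2 M}{\epsilon}$. Let $T$ be a table and $C_T$ the event-log of Algorithm 2 on $T$. If a partial witness tree of weight at least $\gamma$, all of whose non-root vertices $v$ satisfy $x'([v])\ge\frac{1}{4m}$, occurs in $C_T$, then a partial witness tree of weight in $[\gamma,2\gamma]$ occurs in $C_T$.
   Context: Setting: $\mathcal{P}=\{P_1,\dots,P_n\}$ is a finite set of mutually independent discrete random variables with finite domains; $\mathcal{A}$ is a set of $m$ events determined by them; $\mathrm{vbl}(A)$ is the minimal set of variables determining $A$; the dependency graph joins $A\neq B$ iff $\mathrm{vbl}(A)\cap\mathrm{vbl}(B)\neq\emptyset$; $\Gamma(A)$ is the neighborhood and $\Gamma^+(A)=\Gamma(A)\cup\{A\}$. $x'(A)=x(A)\prod_{B\in\Gamma(A)}(1-x(B))$; $\overline{\mathcal{A}}=\{A: x'(A)\ge\frac{1}{4m}\}$; $M=\max\{n,4m,4\sum_{A\in\overline{\mathcal{A}}}\frac{2|\mathrm{vbl}(A)|}{x'(A)}\cdot\frac{x(A)}{1-x(A)}\}$. Binary trees: for each $A$ a rooted binary tree $\mathbb{B}_A$ is fixed, with vertices labeled by nonempty subsets of $\mathrm{vbl}(A)$: root labeled $\mathrm{vbl}(A)$, leaves labeled by singletons, each non-leaf vertex has two children with disjoint labels whose union is its label; $\mathbb{B}_A$ also denotes the set of labels. Partial witness tree: finite rooted tree, root labeled by some $S\in\mathbb{B}_A$ ($A\in\mathcal{A}$),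 other vertices labeled by events; children of the root are labeled by events $B$ with $\mathrm{vbl}(B)\cap S\ne\emptyset$; children of a non-root vertex labeled $B$ are labeled by elements of $\Gamma^+(B)$. $[v]$ denotes the label of a non-root vertex $v$. The weight of an event is $w(A)=-\log_2x'(A)$ and the weight of a partial witness tree is the sum of $w([v])$ over its non-root vertices $v$. Table and log: $T$ gives for each variable $p$ a sequence $T(p,1),T(p,2),\dots$ of values. Algorithm 2: pointers $t_p=1$; while some event happens under $p=T(p,t_p)$ for all $p$, pick one such event $A$ by a fixed deterministic rule and increment $t_p$ for all $p\in\mathrm{vbl}(A)$. The event-log $C_T(1),C_T(2),\dots$ lists the picked events. For a log $C$, step $t$ and $S\in\mathbb{B}_{C(t)}$, $\tau_C(t,S)$ is built by starting with a root labeled $S$ and, for $i=t-1,\dots,1$: if some non-root vertex $v$ has $C(i)\in\Gamma^+([v])$, attach a child labeled $C(i)$ to such a $v$ of maximum depth (ties arbitrary); else if $S\cap\mathrm{vbl}(C(i))\ne\emptyset$, attach a child labeled $C(i)$ to the root; else do nothing. A partial witness tree $\tau_S$ occurs in $C$ if $\tau_S=\tau_C(t,S)$ for some $t$ with $S\in\mathbb{B}_{C(t)}$. *)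

theory Defs
  imports Complex_Main
begin

text \<open>Variables are the elements of a finite type 'v; variable p takes values in the
finite nonempty domain D p. An event is a set of total assignments (elements of {\<sigma>. \<forall>p. \<sigma> p \<in> D p}).\<close>

definition determines :: "('v \<Rightarrow> 'd set) \<Rightarrow> 'v set \<Rightarrow> ('v \<Rightarrow> 'd) set \<Rightarrow> bool" where
  "determines D S A \<longleftrightarrow>
     (\<forall>\<sigma>\<in>{\<sigma>. \<forall>p. \<sigma> p \<in> D p}. \<forall>\<tau>\<in>{\<sigma>. \<forall>p. \<sigma> p \<in> D p}. (\<forall>p\<in>S. \<sigma> p = \<tau> p) \<longrightarrow> (\<sigma> \<in> A \<longleftrightarrow> \<tau> \<in> A))"

text \<open>The minimal set of variables determining A (the intersection of all determining sets;
on a product space this intersection is itself determining).\<close>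
definition vbl :: "('v \<Rightarrow> 'd set) \<Rightarrow> ('v \<Rightarrow> 'd) set \<Rightarrow> 'v set" where
  "vbl D A = \<Inter>{S. determines D S A}"

definition Gamma :: "('v \<Rightarrow> 'd set) \<Rightarrow> ('v \<Rightarrow> 'd) set set \<Rightarrow> ('v \<Rightarrow> 'd) set \<Rightarrow> ('v \<Rightarrow> 'd) set set" where
  "Gamma D \<A> A = {B \<in> \<A>. B \<noteq> A \<and> vbl D A \<inter> vbl D B \<noteq> {}}"

definition Gamma_plus :: "('v \<Rightarrow> 'd set) \<Rightarrow> ('v \<Rightarrow> 'd) set set \<Rightarrow> ('v \<Rightarrow> 'd) set \<Rightarrow> ('v \<Rightarrow> 'd) set set" where
  "Gamma_plus D \<A> A = insert A (Gamma D \<A> A)"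

definition xprime :: "('v \<Rightarrow> 'd set) \<Rightarrow> ('v \<Rightarrow> 'd) set set \<Rightarrow> (('v \<Rightarrow> 'd) set \<Rightarrow> real)
    \<Rightarrow> ('v \<Rightarrow> 'd) set \<Rightarrow> real" where
  "xprime D \<A> x A = x A * (\<Prod>B\<in>Gamma D \<A> A. (1 - x B))"

definition ev_weight :: "('v \<Rightarrow> 'd set) \<Rightarrow> ('v \<Rightarrow> 'd) set set \<Rightarrow> (('v \<Rightarrow> 'd) set \<Rightarrow> real)
    \<Rightarrow> ('v \<Rightarrow> 'd) set \<Rightarrow> real" where
  "ev_weight D \<A> x A = - log 2 (xprime D \<A> x A)"

definition Abar :: "('v \<Rightarrow> 'd set) \<Rightarrow> ('v \<Rightarrow> 'd) set set \<Rightarrow> (('v \<Rightarrow> 'd) set \<Rightarrow> real)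
    \<Rightarrow> ('v \<Rightarrow> 'd) set set" where
  "Abar D \<A> x = {A \<in> \<A>. xprime D \<A> x A \<ge> 1 / (4 * real (card \<A>))}"

definition Mconst :: "('v::finite \<Rightarrow> 'd set) \<Rightarrow> ('v \<Rightarrow> 'd) set set \<Rightarrow> (('v \<Rightarrow> 'd) set \<Rightarrow> real) \<Rightarrow> real" where
  "Mconst D \<A> x = max (real (card (UNIV :: 'v set))) (max (4 * real (card \<A>))
     (4 * (\<Sum>A\<in>Abar D \<A> x. (2 * real (card (vbl D A)) / xprime D \<A> x A) * (x A / (1 - x A)))))"

datatype 'a btree = BLeaf 'a | BNode 'a "'a btree" "'a btree"

fun bt_label :: "'a btree \<Rightarrow> 'a" where
  "bt_label (BLeaf a) = a"
| "bt_label (BNode a l r) = a"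

fun bt_labels :: "'a btree \<Rightarrow> 'a set" where
  "bt_labels (BLeaf a) = {a}"
| "bt_labels (BNode a l r) = insert a (bt_labels l \<union> bt_labels r)"

fun bt_valid :: "'v set btree \<Rightarrow> bool" where
  "bt_valid (BLeaf S) \<longleftrightarrow> (\<exists>p. S = {p})"
| "bt_valid (BNode S l r) \<longleftrightarrow> S \<noteq> {} \<and> bt_label l \<inter> bt_label r = {}
      \<and> bt_label l \<union> bt_label r = S \<and> bt_valid l \<and> bt_valid r"

text \<open>Given the list h of events picked so far, the pointer of variable p is
1 + number of picked events containing p; the current assignment is p |-> T p (t_p).\<close>
definition alg_ptr :: "('v \<Rightarrow> 'd set) \<Rightarrow> ('v \<Rightarrow> 'd) set list \<Rightarrow> 'v \<Rightarrow> nat" where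
  "alg_ptr D h p = 1 + length (filter (\<lambda>A. p \<in> vbl D A) h)"

definition alg_assign :: "('v \<Rightarrow> 'd set) \<Rightarrow> ('v \<Rightarrow> nat \<Rightarrow> 'd) \<Rightarrow> ('v \<Rightarrow> 'd) set list \<Rightarrow> 'v \<Rightarrow> 'd" where
  "alg_assign D T h = (\<lambda>p. T p (alg_ptr D h p))"

definition alg_happening :: "('v \<Rightarrow> 'd set) \<Rightarrow> ('v \<Rightarrow> 'd) set set \<Rightarrow> ('v \<Rightarrow> nat \<Rightarrow> 'd)
    \<Rightarrow> ('v \<Rightarrow> 'd) set list \<Rightarrow> ('v \<Rightarrow> 'd) set set" where
  "alg_happening D \<A> T h = {A \<in> \<A>. alg_assign D T h \<in> A}"

text \<open>alg_log D A T sel k = Some h iff Algorithm 2 performs at least k steps, h being the list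
[C_T(1),...,C_T(k)]; sel is the fixed deterministic selection rule (it may depend on the history).\<close>
fun alg_log :: "('v \<Rightarrow> 'd set) \<Rightarrow> ('v \<Rightarrow> 'd) set set \<Rightarrow> ('v \<Rightarrow> nat \<Rightarrow> 'd)
    \<Rightarrow> (('v \<Rightarrow> 'd) set list \<Rightarrow> ('v \<Rightarrow> 'd) set set \<Rightarrow> ('v \<Rightarrow> 'd) set) \<Rightarrow> nat
    \<Rightarrow> ('v \<Rightarrow> 'd) set list option" where
  "alg_log D \<A> T sel 0 = Some []"
| "alg_log D \<A> T sel (Suc k) = (case alg_log D \<A> T sel k of
      None \<Rightarrow> None
    | Some h \<Rightarrow> (if alg_happening D \<A> T h = {} then None
                 else Some (h @ [sel h (alg_happening D \<A> T h)])))"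

text \<open>The tree is represented with the steps as vertex names: the root is 0, a non-root vertex
is the step i whose event C(i) labels it; the state is (V, par, dep): set of non-root vertices,
parent map (0 = root), depth map. tb is the (arbitrary) tie-breaking rule among candidate
vertices of maximum depth.\<close>
definition tau_step :: "('v \<Rightarrow> 'd set) \<Rightarrow> ('v \<Rightarrow> 'd) set set \<Rightarrow> (nat \<Rightarrow> ('v \<Rightarrow> 'd) set)
    \<Rightarrow> 'v set \<Rightarrow> (nat set \<Rightarrow> nat) \<Rightarrow> nat
    \<Rightarrow> nat set \<times> (nat \<Rightarrow> nat) \<times> (nat \<Rightarrow> nat) \<Rightarrow> nat set \<times> (nat \<Rightarrow> nat) \<times> (nat \<Rightarrow> nat)" where
  "tau_step D \<A> C S tb i st = (case st of (V, par, dep) \<Rightarrow>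
     (let cand = {v \<in> V. C i \<in> Gamma_plus D \<A> (C v)} in
      if cand \<noteq> {} then
        (let d = Max (dep ` cand); v = tb {u \<in> cand. dep u = d} in
         (insert i V, par(i := v), dep(i := d + 1)))
      else if S \<inter> vbl D (C i) \<noteq> {} then (insert i V, par(i := 0), dep(i := 1))
      else (V, par, dep)))"

definition tau :: "('v \<Rightarrow> 'd set) \<Rightarrow> ('v \<Rightarrow> 'd) set set \<Rightarrow> (nat \<Rightarrow> ('v \<Rightarrow> 'd) set)
    \<Rightarrow> (nat \<Rightarrow> 'v set \<Rightarrow> nat \<Rightarrow> nat set \<Rightarrow> nat) \<Rightarrow> nat \<Rightarrow> 'v set
    \<Rightarrow> nat set \<times> (nat \<Rightarrow> nat) \<times> (nat \<Rightarrow> nat)" where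
  "tau D \<A> C tb t S =
     foldl (\<lambda>st i. tau_step D \<A> C S (tb t S i) i st) ({}, \<lambda>_. 0, \<lambda>_. 0) (rev [1..<t])"

definition pwt_weight :: "('v \<Rightarrow> 'd set) \<Rightarrow> ('v \<Rightarrow> 'd) set set \<Rightarrow> (('v \<Rightarrow> 'd) set \<Rightarrow> real)
    \<Rightarrow> (nat \<Rightarrow> ('v \<Rightarrow> 'd) set) \<Rightarrow> nat set \<Rightarrow> real" where
  "pwt_weight D \<A> x C V = (\<Sum>v\<in>V. ev_weight D \<A> x (C v))"

text \<open>A partial witness tree satisfying property P occurs in the log C_T: there is a step t of
the log and S in B_{C_T(t)} such that tau_{C_T}(t,S) satisfies P. The property P receives the
labelling (step i |-> C_T(i)) and the non-root vertex set of the tree.\<close>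
definition pwt_occurs :: "('v \<Rightarrow> 'd set) \<Rightarrow> ('v \<Rightarrow> 'd) set set \<Rightarrow> ('v \<Rightarrow> nat \<Rightarrow> 'd)
    \<Rightarrow> (('v \<Rightarrow> 'd) set list \<Rightarrow> ('v \<Rightarrow> 'd) set set \<Rightarrow> ('v \<Rightarrow> 'd) set)
    \<Rightarrow> (('v \<Rightarrow> 'd) set \<Rightarrow> 'v set btree)
    \<Rightarrow> (nat \<Rightarrow> 'v set \<Rightarrow> nat \<Rightarrow> nat set \<Rightarrow> nat)
    \<Rightarrow> ((nat \<Rightarrow> ('v \<Rightarrow> 'd) set) \<Rightarrow> nat set \<Rightarrow> bool) \<Rightarrow> bool" where
  "pwt_occurs D \<A> T sel B tb P \<longleftrightarrow>
     (\<exists>t h S. 1 \<le> t \<and> alg_log D \<A> T sel t = Some h \<and> S \<in> bt_labels (B (h ! (t - 1))) \<and>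
        P (\<lambda>i. h ! (i - 1)) (fst (tau D \<A> (\<lambda>i. h ! (i - 1)) tb t S)))"

end

theory Submission
  imports Defs
begin

text \<open>A step i < t is a vertex of \<tau>_C(t,S) exactly when C(i) meets S or lies in
  Gamma+ of some later vertex, so the vertex set does not depend on depths or tie-breaking.
  Consequently the tree of S1 \<union> S2 is the union of the trees of S1 and S2, and the tree of a
  singleton {p} consists of the last step i0 < t using p on top of the tree
  \<tau>_C(i0, vbl C(i0)). Starting from a heavy tree all of whose vertices weigh at most \<gamma>,
  repeatedly pass to a child label of B carrying weight at least \<gamma>, or from {p} to the
  tree at i0; each move keeps the weight at least \<gamma> as long as it exceeds 2\<gamma>, and
  (t, |S|) decreases lexicographically.\<close>

definition linked_steps ::
    "('v \<Rightarrow> 'd set) \<Rightarrow> ('v \<Rightarrow> 'd) set set \<Rightarrow> (nat \<Rightarrow> ('v \<Rightarrow> 'd) set) \<Rightarrow> 'v set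
      \<Rightarrow> nat \<Rightarrow> nat \<Rightarrow> nat set \<Rightarrow> bool" where
  "linked_steps D \<A> C S k t V \<longleftrightarrow>
     (\<forall>i. i \<in> V \<longleftrightarrow> k \<le> i \<and> i < t \<and>
        (S \<inter> vbl D (C i) \<noteq> {} \<or> (\<exists>j\<in>V. i < j \<and> C i \<in> Gamma_plus D \<A> (C j))))"

definition tau_vertices ::
    "('v \<Rightarrow> 'd set) \<Rightarrow> ('v \<Rightarrow> 'd) set set \<Rightarrow> (nat \<Rightarrow> ('v \<Rightarrow> 'd) set) \<Rightarrow> nat \<Rightarrow> 'v set
      \<Rightarrow> nat set" where
  "tau_vertices D \<A> C t S = (THE V. linked_steps D \<A> C S 1 t V)"

lemma fst_tau_step:
  "fst (tau_step D \<A> C S tb' i st) =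
     (if (\<exists>v\<in>fst st. C i \<in> Gamma_plus D \<A> (C v)) \<or> S \<inter> vbl D (C i) \<noteq> {}
      then insert i (fst st) else fst st)"
  by (cases st) (auto simp: tau_step_def Let_def)

lemma linked_steps_Suc:
  assumes V: "linked_steps D \<A> C S (Suc k) t V" and "k < t"
  shows "linked_steps D \<A> C S k t
           (if (\<exists>v\<in>V. C k \<in> Gamma_plus D \<A> (C v)) \<or> S \<inter> vbl D (C k) \<noteq> {}
            then insert k V else V)"
    (is "linked_steps D \<A> C S k t ?V'")
proof -
  have later: "k < j" if "j \<in> V" for j
    using V that unfolding linked_steps_def by (meson Suc_le_eq)
  have "i \<in> ?V' \<longleftrightarrow> k \<le> i \<and> i < t \<and>
          (S \<inter> vbl D (C i) \<noteq> {} \<or> (\<exists>j\<in>?V'. i < j \<and> C i \<in> Gamma_plus D \<A> (C j)))" for i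
  proof (cases i k rule: linorder_cases)
    case less
    then have "i \<notin> ?V'" using later[of i] by auto
    with less show ?thesis by simp
  next
    case equal
    have "k \<notin> V" using later by blast
    moreover have "(\<exists>j\<in>?V'. k < j \<and> C k \<in> Gamma_plus D \<A> (C j)) \<longleftrightarrow>
                   (\<exists>j\<in>V. C k \<in> Gamma_plus D \<A> (C j))"
      using later by auto
    ultimately show ?thesis using equal \<open>k < t\<close> by simp
  next
    case greater
    then have "(\<exists>j\<in>?V'. i < j \<and> C i \<in> Gamma_plus D \<A> (C j)) \<longleftrightarrow>
               (\<exists>j\<in>V. i < j \<and> C i \<in> Gamma_plus D \<A> (C j))"
      by auto
    moreover have "i \<in> ?V' \<longleftrightarrow> i \<in> V" using greater by auto
    moreover have "i \<in> V \<longleftrightarrow> Suc k \<le> i \<and> i < t \<and>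
        (S \<inter> vbl D (C i) \<noteq> {} \<or> (\<exists>j\<in>V. i < j \<and> C i \<in> Gamma_plus D \<A> (C j)))"
      using V unfolding linked_steps_def by blast
    ultimately show ?thesis using greater by (simp add: Suc_le_eq)
  qed
  then show ?thesis unfolding linked_steps_def by (rule allI)
qed

lemma linked_steps_tau_fold:
  assumes "k \<le> t" and "fst st = {}"
  shows "linked_steps D \<A> C S k t (fst (foldl (\<lambda>st i. tau_step D \<A> C S (f i) i st) st (rev [k..<t])))"
  using assms(1)
proof (induction "t - k" arbitrary: k)
  case 0
  then show ?case using assms(2) by (auto simp: linked_steps_def)
next
  case (Suc n)
  let ?fold = "\<lambda>k. foldl (\<lambda>st i. tau_step D \<A> C S (f i) i st) st (rev [k..<t])"
  have kt: "k < t" using Suc by simp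
  have "rev [k..<t] = rev [Suc k..<t] @ [k]"
    using kt by (simp add: upt_conv_Cons)
  then have fold: "?fold k = tau_step D \<A> C S (f k) k (?fold (Suc k))"
    by simp
  have "linked_steps D \<A> C S (Suc k) t (fst (?fold (Suc k)))"
    using Suc.hyps(1)[of "Suc k"] Suc.hyps(2) kt by simp
  from linked_steps_Suc[OF this kt] show ?case
    by (simp only: fold fst_tau_step)
qed

lemma linked_steps_unique:
  assumes V1: "linked_steps D \<A> C S k t V1" and V2: "linked_steps D \<A> C S k t V2"
  shows "V1 = V2"
proof -
  note mem1 = V1[unfolded linked_steps_def, rule_format]
  note mem2 = V2[unfolded linked_steps_def, rule_format]
  have "i \<in> V1 \<longleftrightarrow> i \<in> V2" for i
  proof (induction "t - i" arbitrary: i rule: less_induct)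
    case less
    have "j \<in> V1 \<longleftrightarrow> j \<in> V2" if "i < j" for j
    proof (cases "j < t")
      case True
      then show ?thesis using less[of j] that by simp
    next
      case False
      then show ?thesis using mem1[of j] mem2[of j] by auto
    qed
    then show ?case using mem1[of i] mem2[of i] by blast
  qed
  then show ?thesis by blast
qed

lemma tau_vertices_eqI: "linked_steps D \<A> C S 1 t V \<Longrightarrow> tau_vertices D \<A> C t S = V"
  unfolding tau_vertices_def by (metis the_equality linked_steps_unique)

lemma linked_steps_fst_tau: "linked_steps D \<A> C S 1 t (fst (tau D \<A> C tb t S))"
proof (cases "t = 0")
  case True
  then show ?thesis by (simp add: tau_def linked_steps_def)
next
  case False
  then show ?thesis unfolding tau_def by (intro linked_steps_tau_fold) auto
qed

lemma fst_tau: "fst (tau D \<A> C tb t S) = tau_vertices D \<A> C t S"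
  by (rule tau_vertices_eqI[symmetric]) (rule linked_steps_fst_tau)

lemma linked_steps_tau_vertices: "linked_steps D \<A> C S 1 t (tau_vertices D \<A> C t S)"
  using linked_steps_fst_tau fst_tau by metis

lemma tau_vertices_iff:
  "i \<in> tau_vertices D \<A> C t S \<longleftrightarrow> 1 \<le> i \<and> i < t \<and>
     (S \<inter> vbl D (C i) \<noteq> {} \<or> (\<exists>j\<in>tau_vertices D \<A> C t S. i < j \<and> C i \<in> Gamma_plus D \<A> (C j)))"
  using linked_steps_tau_vertices unfolding linked_steps_def by blast

lemma tau_vertices_subset: "tau_vertices D \<A> C t S \<subseteq> {1..<t}"
proof
  fix i assume "i \<in> tau_vertices D \<A> C t S"
  then have "1 \<le> i \<and> i < t" using tau_vertices_iff[of i D \<A> C t S] by blast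
  then show "i \<in> {1..<t}" by simp
qed

lemma finite_tau_vertices: "finite (tau_vertices D \<A> C t S)"
  using finite_subset[OF tau_vertices_subset finite_atLeastLessThan] .

lemma tau_vertices_Un:
  "tau_vertices D \<A> C t (S1 \<union> S2) = tau_vertices D \<A> C t S1 \<union> tau_vertices D \<A> C t S2"
proof (rule tau_vertices_eqI)
  show "linked_steps D \<A> C (S1 \<union> S2) 1 t (tau_vertices D \<A> C t S1 \<union> tau_vertices D \<A> C t S2)"
    unfolding linked_steps_def
  proof (intro allI)
    fix i
    show "i \<in> tau_vertices D \<A> C t S1 \<union> tau_vertices D \<A> C t S2 \<longleftrightarrow> 1 \<le> i \<and> i < t \<and>
      ((S1 \<union> S2) \<inter> vbl D (C i) \<noteq> {} \<or> (\<exists>j\<in>tau_vertices D \<A> C t S1 \<union> tau_vertices D \<A> C t S2.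
         i < j \<and> C i \<in> Gamma_plus D \<A> (C j)))"
      unfolding Un_iff Int_Un_distrib2 Un_empty bex_Un
        tau_vertices_iff[of i D \<A> C t S1] tau_vertices_iff[of i D \<A> C t S2]
      by blast
  qed
qed

lemma tau_vertices_cong:
  assumes agree: "\<forall>i. 1 \<le> i \<and> i < t \<longrightarrow> C' i = C i"
  shows "tau_vertices D \<A> C' t S = tau_vertices D \<A> C t S"
proof (rule tau_vertices_eqI)
  let ?V = "tau_vertices D \<A> C t S"
  have agree_V: "\<forall>j\<in>?V. C' j = C j"
    using agree tau_vertices_subset by fastforce
  show "linked_steps D \<A> C' S 1 t ?V"
    unfolding linked_steps_def
  proof (intro allI)
    fix i
    show "i \<in> ?V \<longleftrightarrow> 1 \<le> i \<and> i < t \<and>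
            (S \<inter> vbl D (C' i) \<noteq> {} \<or> (\<exists>j\<in>?V. i < j \<and> C' i \<in> Gamma_plus D \<A> (C' j)))"
    proof (cases "1 \<le> i \<and> i < t")
      case True
      then have "C' i = C i" using agree by blast
      then show ?thesis using True agree_V tau_vertices_iff[of i D \<A> C t S] by simp
    next
      case False
      then show ?thesis using tau_vertices_iff[of i D \<A> C t S] by blast
    qed
  qed
qed

lemma tau_vertices_singleton_unused:
  assumes "\<forall>i. 1 \<le> i \<and> i < t \<longrightarrow> p \<notin> vbl D (C i)"
  shows "tau_vertices D \<A> C t {p} = {}"
  by (rule tau_vertices_eqI) (use assms in \<open>auto simp: linked_steps_def\<close>)

lemma Gamma_plus_iff_vbl_overlap:
  assumes "B \<in> \<A>" and "vbl D A \<noteq> {}"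
  shows "B \<in> Gamma_plus D \<A> A \<longleftrightarrow> vbl D A \<inter> vbl D B \<noteq> {}"
  using assms by (auto simp: Gamma_plus_def Gamma_def)

lemma tau_vertices_singleton:
  assumes events: "\<forall>i. 1 \<le> i \<and> i < t \<longrightarrow> C i \<in> \<A>"
    and i0: "1 \<le> i0" "i0 < t" "p \<in> vbl D (C i0)"
    and last: "\<forall>i. i0 < i \<and> i < t \<longrightarrow> p \<notin> vbl D (C i)"
  shows "tau_vertices D \<A> C t {p} = insert i0 (tau_vertices D \<A> C i0 (vbl D (C i0)))"
proof (rule tau_vertices_eqI)
  let ?V = "tau_vertices D \<A> C i0 (vbl D (C i0))"
  have V_below: "j < i0" if "j \<in> ?V" for j
    using tau_vertices_subset that by fastforce
  show "linked_steps D \<A> C {p} 1 t (insert i0 ?V)"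
    unfolding linked_steps_def
  proof (intro allI)
    fix i
    show "i \<in> insert i0 ?V \<longleftrightarrow> 1 \<le> i \<and> i < t \<and>
            ({p} \<inter> vbl D (C i) \<noteq> {} \<or> (\<exists>j\<in>insert i0 ?V. i < j \<and> C i \<in> Gamma_plus D \<A> (C j)))"
    proof (cases i i0 rule: linorder_cases)
      case less
      show ?thesis
      proof (cases "1 \<le> i")
        case True
        then have "C i \<in> Gamma_plus D \<A> (C i0) \<longleftrightarrow> vbl D (C i0) \<inter> vbl D (C i) \<noteq> {}"
          using events less i0 by (intro Gamma_plus_iff_vbl_overlap) auto
        then show ?thesis
          using less True i0 V_below tau_vertices_iff[of i D \<A> C i0 "vbl D (C i0)"] by auto
      next
        case False
        then show ?thesis using i0 V_below tau_vertices_iff[of i D \<A> C i0 "vbl D (C i0)"] by auto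
      qed
    next
      case equal
      then show ?thesis using i0 by auto
    next
      case greater
      then show ?thesis using V_below last[rule_format, of i] by fastforce
    qed
  qed
qed

definition tau_weight ::
    "('v \<Rightarrow> 'd set) \<Rightarrow> ('v \<Rightarrow> 'd) set set \<Rightarrow> (('v \<Rightarrow> 'd) set \<Rightarrow> real)
      \<Rightarrow> (nat \<Rightarrow> ('v \<Rightarrow> 'd) set) \<Rightarrow> nat \<Rightarrow> 'v set \<Rightarrow> real" where
  "tau_weight D \<A> x C t S = pwt_weight D \<A> x C (tau_vertices D \<A> C t S)"

lemma tau_weight_Un_le:
  assumes "\<forall>i. 1 \<le> i \<and> i < t \<longrightarrow> 0 \<le> ev_weight D \<A> x (C i)"
  shows "tau_weight D \<A> x C t (S1 \<union> S2) \<le> tau_weight D \<A> x C t S1 + tau_weight D \<A> x C t S2"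
proof -
  let ?w = "\<lambda>v. ev_weight D \<A> x (C v)"
  let ?V1 = "tau_vertices D \<A> C t S1" and ?V2 = "tau_vertices D \<A> C t S2"
  have "0 \<le> sum ?w (?V1 \<inter> ?V2)"
    using assms tau_vertices_subset[of D \<A> C t S1] by (intro sum_nonneg) auto
  moreover have "sum ?w (?V1 \<union> ?V2) = sum ?w ?V1 + sum ?w ?V2 - sum ?w (?V1 \<inter> ?V2)"
    by (rule sum_Un[OF finite_tau_vertices finite_tau_vertices])
  ultimately show ?thesis
    unfolding tau_weight_def pwt_weight_def tau_vertices_Un by linarith
qed

lemma tau_weight_singleton:
  assumes "\<forall>i. 1 \<le> i \<and> i < t \<longrightarrow> C i \<in> \<A>"
    and "1 \<le> i0" "i0 < t" "p \<in> vbl D (C i0)"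
    and "\<forall>i. i0 < i \<and> i < t \<longrightarrow> p \<notin> vbl D (C i)"
  shows "tau_weight D \<A> x C t {p} = ev_weight D \<A> x (C i0) + tau_weight D \<A> x C i0 (vbl D (C i0))"
proof -
  have "i0 \<notin> tau_vertices D \<A> C i0 (vbl D (C i0))"
    using tau_vertices_subset by fastforce
  then show ?thesis
    unfolding tau_weight_def pwt_weight_def tau_vertices_singleton[OF assms]
    by (simp add: finite_tau_vertices)
qed

lemma bt_label_ne: "bt_valid b \<Longrightarrow> bt_label b \<noteq> {}"
  by (cases b) auto

lemma bt_label_in_labels: "bt_label b \<in> bt_labels b"
  by (cases b) auto

lemma bt_labels_split:
  "bt_valid b \<Longrightarrow> S \<in> bt_labels b \<Longrightarrow> (\<exists>p. S = {p}) \<or>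
     (\<exists>S1 S2. S1 \<in> bt_labels b \<and> S2 \<in> bt_labels b \<and> S = S1 \<union> S2 \<and> S1 \<subset> S \<and> S2 \<subset> S)"
proof (induction b)
  case (BLeaf S')
  then show ?case by simp
next
  case (BNode S' l r)
  then have valid: "bt_valid l" "bt_valid r" by simp_all
  have sub: "bt_labels l \<subseteq> bt_labels (BNode S' l r)" "bt_labels r \<subseteq> bt_labels (BNode S' l r)"
    by auto
  show ?case
  proof (cases "S = S'")
    case True
    then have "bt_label l \<inter> bt_label r = {}" "bt_label l \<union> bt_label r = S"
      using BNode.prems(1) by simp_all
    moreover have "bt_label l \<noteq> {}" "bt_label r \<noteq> {}"
      using valid bt_label_ne by auto
    moreover have "bt_label l \<in> bt_labels (BNode S' l r)" "bt_label r \<in> bt_labels (BNode S' l r)"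
      using sub bt_label_in_labels by blast+
    ultimately show ?thesis by blast
  next
    case False
    with BNode.prems(2) have "S \<in> bt_labels l \<or> S \<in> bt_labels r" by simp
    then show ?thesis
      using BNode.IH valid sub by blast
  qed
qed

lemma heavy_singleton_tau_descends:
  assumes events: "\<forall>i. 1 \<le> i \<and> i < t \<longrightarrow> C i \<in> \<A>" and "0 \<le> \<gamma>"
    and heavy: "2 * \<gamma> < tau_weight D \<A> x C t {p}"
    and light: "\<forall>v\<in>tau_vertices D \<A> C t {p}. ev_weight D \<A> x (C v) \<le> \<gamma>"
  obtains i0 where "1 \<le> i0" "i0 < t" "\<gamma> \<le> tau_weight D \<A> x C i0 (vbl D (C i0))"
    "tau_vertices D \<A> C i0 (vbl D (C i0)) \<subseteq> tau_vertices D \<A> C t {p}"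
proof -
  let ?users = "{i. 1 \<le> i \<and> i < t \<and> p \<in> vbl D (C i)}"
  have "?users \<noteq> {}"
  proof
    assume "?users = {}"
    then have "tau_weight D \<A> x C t {p} = 0"
      using tau_vertices_singleton_unused[of t p D C \<A>] by (simp add: tau_weight_def pwt_weight_def)
    with heavy \<open>0 \<le> \<gamma>\<close> show False by simp
  qed
  define i0 where "i0 = Max ?users"
  have users: "finite ?users" by simp
  then have "i0 \<in> ?users" unfolding i0_def using \<open>?users \<noteq> {}\<close> by (rule Max_in)
  then have i0: "1 \<le> i0" "i0 < t" "p \<in> vbl D (C i0)" by auto
  have last: "\<forall>i. i0 < i \<and> i < t \<longrightarrow> p \<notin> vbl D (C i)"
  proof (intro allI impI)
    fix i assume i: "i0 < i \<and> i < t"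
    then have "i \<notin> ?users" using Max_ge[OF users, of i] unfolding i0_def by linarith
    then show "p \<notin> vbl D (C i)" using i i0(1) by simp
  qed
  note V_eq = tau_vertices_singleton[OF events i0 last]
  have "ev_weight D \<A> x (C i0) \<le> \<gamma>" using light V_eq by simp
  then have "\<gamma> \<le> tau_weight D \<A> x C i0 (vbl D (C i0))"
    using heavy tau_weight_singleton[OF events i0 last, where x = x] by linarith
  moreover have "tau_vertices D \<A> C i0 (vbl D (C i0)) \<subseteq> tau_vertices D \<A> C t {p}"
    using V_eq by blast
  ultimately show ?thesis by (rule that[OF i0(1,2)])
qed

lemma heavy_tau_descent:
  fixes D :: "'v::finite \<Rightarrow> 'd set"
  assumes trees: "\<forall>A\<in>\<A>. bt_valid (B A) \<and> bt_label (B A) = vbl D A"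
    and nonneg: "\<forall>A\<in>\<A>. 0 \<le> ev_weight D \<A> x A"
    and "0 \<le> \<gamma>"
  shows "1 \<le> t \<Longrightarrow> \<forall>i. 1 \<le> i \<and> i \<le> t \<longrightarrow> C i \<in> \<A> \<Longrightarrow> S \<in> bt_labels (B (C t)) \<Longrightarrow>
    \<gamma> \<le> tau_weight D \<A> x C t S \<Longrightarrow> \<forall>v\<in>tau_vertices D \<A> C t S. ev_weight D \<A> x (C v) \<le> \<gamma> \<Longrightarrow>
    \<exists>t' S'. 1 \<le> t' \<and> t' \<le> t \<and> S' \<in> bt_labels (B (C t')) \<and>
      \<gamma> \<le> tau_weight D \<A> x C t' S' \<and> tau_weight D \<A> x C t' S' \<le> 2 * \<gamma>"
proof (induction t arbitrary: S rule: less_induct)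
  case (less t)
  note earlier_step = less.IH
  from less.prems show ?case
  proof (induction "card S" arbitrary: S rule: less_induct)
    case less
    note t = less.prems(1) and events = less.prems(2) and S = less.prems(3)
      and heavy = less.prems(4) and light = less.prems(5)
    let ?W = "tau_weight D \<A> x C"
    show ?case
    proof (cases "?W t S \<le> 2 * \<gamma>")
      case True
      then show ?thesis using t S heavy by blast
    next
      case too_heavy: False
      have "C t \<in> \<A>" using events t by blast
      then have "bt_valid (B (C t))" using trees by blast
      from bt_labels_split[OF this S] consider (single) p where "S = {p}"
        | (split) S1 S2 where "S1 \<in> bt_labels (B (C t))" "S2 \<in> bt_labels (B (C t))"
          "S = S1 \<union> S2" "S1 \<subset> S" "S2 \<subset> S"
        by blast
      then show ?thesis
      proof cases
        case split
        have "?W t S \<le> ?W t S1 + ?W t S2"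
          using split(3) events nonneg by (simp only:) (rule tau_weight_Un_le, auto)
        then have "\<gamma> \<le> ?W t S1 \<or> \<gamma> \<le> ?W t S2" using too_heavy by linarith
        then obtain S' where S': "S' = S1 \<or> S' = S2" "\<gamma> \<le> ?W t S'" by blast
        have "card S' < card S" using S'(1) split(4,5) psubset_card_mono[of S] by auto
        moreover have "tau_vertices D \<A> C t S' \<subseteq> tau_vertices D \<A> C t S"
          using S'(1) split(3) tau_vertices_Un by blast
        ultimately show ?thesis
          using less.hyps t events split(1,2) S' light by blast
      next
        case single
        have events_t: "\<forall>i. 1 \<le> i \<and> i < t \<longrightarrow> C i \<in> \<A>" using events by simp
        have "2 * \<gamma> < ?W t {p}" using too_heavy single by simp
        from heavy_singleton_tau_descends[OF events_t \<open>0 \<le> \<gamma>\<close> this light[unfolded single]]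
        obtain i0 where i0: "1 \<le> i0" "i0 < t" "\<gamma> \<le> ?W i0 (vbl D (C i0))"
          and sub: "tau_vertices D \<A> C i0 (vbl D (C i0)) \<subseteq> tau_vertices D \<A> C t {p}" .
        have "\<forall>i. 1 \<le> i \<and> i \<le> i0 \<longrightarrow> C i \<in> \<A>" using events i0(2) by simp
        moreover have "vbl D (C i0) \<in> bt_labels (B (C i0))"
          using trees events i0 bt_label_in_labels by (metis less_imp_le)
        moreover have "\<forall>v\<in>tau_vertices D \<A> C i0 (vbl D (C i0)). ev_weight D \<A> x (C v) \<le> \<gamma>"
          using light single sub by blast
        ultimately obtain t' S' where "1 \<le> t' \<and> t' \<le> i0 \<and> S' \<in> bt_labels (B (C t')) \<and>
            \<gamma> \<le> ?W t' S' \<and> ?W t' S' \<le> 2 * \<gamma>"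
          using earlier_step[OF i0(2,1) _ _ i0(3)] by blast
        then show ?thesis using i0 by (meson less_imp_le order_trans)
      qed
    qed
  qed
qed

lemma ev_weight_nonneg:
  assumes "A \<in> \<A>" and x: "\<forall>A\<in>\<A>. 0 < x A \<and> x A < 1"
  shows "0 \<le> ev_weight D \<A> x A"
proof -
  have "\<forall>B\<in>Gamma D \<A> A. 0 < 1 - x B \<and> 1 - x B \<le> 1"
    using x by (auto simp: Gamma_def)
  then have "0 < (\<Prod>B\<in>Gamma D \<A> A. 1 - x B)" "(\<Prod>B\<in>Gamma D \<A> A. 1 - x B) \<le> 1"
    by (auto intro!: prod_pos prod_le_1)
  moreover have "0 < x A" "x A \<le> 1" using x assms(1) by auto
  ultimately have "0 < xprime D \<A> x A" "xprime D \<A> x A \<le> 1"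
    unfolding xprime_def by (auto intro: mult_le_one)
  then show ?thesis unfolding ev_weight_def by simp
qed

lemma ev_weight_le_log_Mconst:
  assumes "finite \<A>" "A \<in> \<A>" and "1 / (4 * real (card \<A>)) \<le> xprime D \<A> x A"
  shows "ev_weight D \<A> x A \<le> log 2 (Mconst D \<A> x)"
proof -
  have m: "0 < real (card \<A>)" using assms(1,2) card_gt_0_iff by auto
  have "0 < 1 / (4 * real (card \<A>))" using m by simp
  then have "log 2 (1 / (4 * real (card \<A>))) \<le> log 2 (xprime D \<A> x A)"
    using assms(3) by (subst log_le_cancel_iff) linarith+
  then have "ev_weight D \<A> x A \<le> - log 2 (1 / (4 * real (card \<A>)))"
    unfolding ev_weight_def by simp
  also have "\<dots> = log 2 (4 * real (card \<A>))"
    using m by (simp add: log_divide)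
  also have "\<dots> \<le> log 2 (Mconst D \<A> x)"
    using m by (simp add: Mconst_def)
  finally show ?thesis .
qed

lemma log_Mconst_nonneg:
  assumes "finite \<A>" "\<A> \<noteq> {}"
  shows "0 \<le> log 2 (Mconst D \<A> x)"
proof -
  have "0 < card \<A>" using assms by (simp add: card_gt_0_iff)
  then have "1 \<le> 4 * real (card \<A>)" by simp
  also have "\<dots> \<le> Mconst D \<A> x" by (simp add: Mconst_def)
  finally show ?thesis by simp
qed

lemma alg_log_length: "alg_log D \<A> T sel k = Some h \<Longrightarrow> length h = k"
  by (induction k arbitrary: h) (auto split: option.splits if_splits)

lemma alg_log_take:
  "alg_log D \<A> T sel k = Some h \<Longrightarrow> j \<le> k \<Longrightarrow> alg_log D \<A> T sel j = Some (take j h)"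
proof (induction k arbitrary: h)
  case 0
  then show ?case by simp
next
  case (Suc k)
  then obtain h' where h': "alg_log D \<A> T sel k = Some h'" "h = h' @ [sel h' (alg_happening D \<A> T h')]"
    by (auto split: option.splits if_splits)
  show ?case
  proof (cases "j = Suc k")
    case True
    then show ?thesis using Suc.prems(1) alg_log_length[OF Suc.prems(1)] by simp
  next
    case False
    then show ?thesis using Suc.IH[OF h'(1)] Suc.prems(2) h' alg_log_length[OF h'(1)] by simp
  qed
qed

lemma alg_log_events:
  assumes sel: "\<forall>h X. X \<noteq> {} \<longrightarrow> X \<subseteq> \<A> \<longrightarrow> sel h X \<in> X"
  shows "alg_log D \<A> T sel k = Some h \<Longrightarrow> set h \<subseteq> \<A>"
proof (induction k arbitrary: h)
  case 0
  then show ?case by simp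
next
  case (Suc k)
  then obtain h' where h': "alg_log D \<A> T sel k = Some h'" "alg_happening D \<A> T h' \<noteq> {}"
      "h = h' @ [sel h' (alg_happening D \<A> T h')]"
    by (auto split: option.splits if_splits)
  have "alg_happening D \<A> T h' \<subseteq> \<A>" by (auto simp: alg_happening_def)
  moreover have "sel h' (alg_happening D \<A> T h') \<in> alg_happening D \<A> T h'"
    using sel h'(2) calculation by blast
  ultimately show ?case using Suc.IH[OF h'(1)] h'(3) by auto
qed

lemma pwt_occurs_at_earlier_step:
  assumes log: "alg_log D \<A> T sel t = Some h" and "1 \<le> t'" "t' \<le> t"
    and S: "S \<in> bt_labels (B (h ! (t' - 1)))"
    and P: "P (tau_weight D \<A> x (\<lambda>i. h ! (i - 1)) t' S)"
  shows "pwt_occurs D \<A> T sel B tb (\<lambda>C V. P (pwt_weight D \<A> x C V))"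
proof -
  let ?C = "\<lambda>i. h ! (i - 1)" and ?h' = "take t' h"
  let ?C' = "\<lambda>i. ?h' ! (i - 1)"
  have agree: "\<forall>i. 1 \<le> i \<and> i \<le> t' \<longrightarrow> ?C' i = ?C i"
    using alg_log_length[OF log] assms(3) by auto
  then have V: "tau_vertices D \<A> ?C' t' S = tau_vertices D \<A> ?C t' S"
    by (intro tau_vertices_cong) auto
  have "pwt_weight D \<A> x ?C' (tau_vertices D \<A> ?C t' S) = tau_weight D \<A> x ?C t' S"
    unfolding pwt_weight_def tau_weight_def
    using agree tau_vertices_subset[of D \<A> ?C t' S] by (intro sum.cong) auto
  then have "P (pwt_weight D \<A> x ?C' (fst (tau D \<A> ?C' tb t' S)))"
    unfolding fst_tau V using P by simp
  moreover have "S \<in> bt_labels (B (?h' ! (t' - 1)))" using agree assms(2) S by auto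
  ultimately show ?thesis
    unfolding pwt_occurs_def using alg_log_take[OF log assms(3)] assms(2) by blast
qed

theorem lemma3p2:
  fixes D :: "'v::finite \<Rightarrow> 'd set"
    and \<A> :: "('v \<Rightarrow> 'd) set set"
    and x :: "('v \<Rightarrow> 'd) set \<Rightarrow> real"
    and B :: "('v \<Rightarrow> 'd) set \<Rightarrow> 'v set btree"
    and T :: "'v \<Rightarrow> nat \<Rightarrow> 'd"
    and sel :: "('v \<Rightarrow> 'd) set list \<Rightarrow> ('v \<Rightarrow> 'd) set set \<Rightarrow> ('v \<Rightarrow> 'd) set"
    and tb :: "nat \<Rightarrow> 'v set \<Rightarrow> nat \<Rightarrow> nat set \<Rightarrow> nat"
    and \<epsilon> \<gamma> :: real
  assumes dom: "\<forall>p. finite (D p) \<and> D p \<noteq> {}"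
    and finA: "finite \<A>"
    and evs: "\<forall>A\<in>\<A>. A \<subseteq> {\<sigma>. \<forall>p. \<sigma> p \<in> D p}"
    and trees: "\<forall>A\<in>\<A>. bt_valid (B A) \<and> bt_label (B A) = vbl D A"
    and eps: "0 < \<epsilon>" "\<epsilon> < 1"
    and xA: "\<forall>A\<in>\<A>. 0 < x A \<and> x A < 1"
    and table: "\<forall>p i. T p i \<in> D p"
    and sel: "\<forall>h X. X \<noteq> {} \<longrightarrow> X \<subseteq> \<A> \<longrightarrow> sel h X \<in> X"
    and tb: "\<forall>t S i X. X \<noteq> {} \<longrightarrow> finite X \<longrightarrow> tb t S i X \<in> X"
    and gamma: "\<gamma> = log 2 (Mconst D \<A> x) / \<epsilon>"
    and occ: "pwt_occurs D \<A> T sel B tb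
                (\<lambda>C V. pwt_weight D \<A> x C V \<ge> \<gamma> \<and>
                       (\<forall>v\<in>V. xprime D \<A> x (C v) \<ge> 1 / (4 * real (card \<A>))))"
  shows "pwt_occurs D \<A> T sel B tb
           (\<lambda>C V. \<gamma> \<le> pwt_weight D \<A> x C V \<and> pwt_weight D \<A> x C V \<le> 2 * \<gamma>)"
proof -
  obtain t h S where t: "1 \<le> t" and log: "alg_log D \<A> T sel t = Some h"
    and S: "S \<in> bt_labels (B (h ! (t - 1)))"
    and heavy: "\<gamma> \<le> tau_weight D \<A> x (\<lambda>i. h ! (i - 1)) t S"
    and large_xprime: "\<forall>v\<in>tau_vertices D \<A> (\<lambda>i. h ! (i - 1)) t S.
                          1 / (4 * real (card \<A>)) \<le> xprime D \<A> x (h ! (v - 1))"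
    using occ unfolding pwt_occurs_def fst_tau tau_weight_def by blast
  let ?C = "\<lambda>i. h ! (i - 1)"
  have events: "\<forall>i. 1 \<le> i \<and> i \<le> t \<longrightarrow> ?C i \<in> \<A>"
    using alg_log_events[OF sel log] alg_log_length[OF log] by auto
  then have "\<A> \<noteq> {}" using t by blast
  then have "0 \<le> log 2 (Mconst D \<A> x)" by (rule log_Mconst_nonneg[OF finA])
  then have log_M: "log 2 (Mconst D \<A> x) \<le> \<gamma>" "0 \<le> \<gamma>"
    using eps unfolding gamma by (simp_all add: le_divide_eq mult_left_le)
  have light: "\<forall>v\<in>tau_vertices D \<A> ?C t S. ev_weight D \<A> x (?C v) \<le> \<gamma>"
    using large_xprime events tau_vertices_subset[of D \<A> ?C t S] finA log_M(1)
    by (fastforce dest: ev_weight_le_log_Mconst)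
  moreover have "\<forall>A\<in>\<A>. 0 \<le> ev_weight D \<A> x A" using xA ev_weight_nonneg by blast
  ultimately obtain t' S' where "1 \<le> t'" "t' \<le> t" "S' \<in> bt_labels (B (?C t'))"
      "\<gamma> \<le> tau_weight D \<A> x ?C t' S'" "tau_weight D \<A> x ?C t' S' \<le> 2 * \<gamma>"
    using heavy_tau_descent[OF trees _ log_M(2) t events _ heavy] S by blast
  then show ?thesis
    using pwt_occurs_at_earlier_step[OF log, where P = "\<lambda>w. \<gamma> \<le> w \<and> w \<le> 2 * \<gamma>"] by blast
qed

end
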